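(* Let $G$ be a finite group. For all subsets $X,Y\subseteq G$ with $X^G=X$ and $Y^G=Y$ we have $[X,{}_MY]=[[X,G],{}_MY]$.
   Context: $[x,y]=x^{-1}y^{-1}xy$, $x^y=y^{-1}xy$, $X^G=\{x^g:x\in X,g\in G\}$. For subsets $A,B\subseteq G$, $[A,B]$ is the subgroup generated by $\{[a,b]:a\in A,b\in B\}$, and $[A,{}_kB]=[\cdots[[A,B],B]\cdots,B]$ with $k$ copies of $B$. $M=M(G)\in\mathbb{N}$ is fixed such that $[A,{}_MB]=[A,{}_iB]$ for all $i\ge M$ and all $A,B\subseteq G$ with $A^G=A$, $B^G=B$. *)

theory Defs
  imports "HOL-Algebra.Generated_Groups"
begin

definition gcomm :: "('a, 'b) monoid_scheme \<Rightarrow> 'a \<Rightarrow> 'a \<Rightarrow> 'a" where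
  "gcomm G x y = inv\<^bsub>G\<^esub> x \<otimes>\<^bsub>G\<^esub> inv\<^bsub>G\<^esub> y \<otimes>\<^bsub>G\<^esub> x \<otimes>\<^bsub>G\<^esub> y"

definition comm_set :: "('a, 'b) monoid_scheme \<Rightarrow> 'a set \<Rightarrow> 'a set \<Rightarrow> 'a set" where
  "comm_set G A B = generate G {gcomm G a b | a b. a \<in> A \<and> b \<in> B}"

definition iter_comm :: "('a, 'b) monoid_scheme \<Rightarrow> 'a set \<Rightarrow> 'a set \<Rightarrow> nat \<Rightarrow> 'a set" where
  "iter_comm G A B k = ((\<lambda>C. comm_set G C B) ^^ k) A"

definition normal_subset :: "('a, 'b) monoid_scheme \<Rightarrow> 'a set \<Rightarrow> bool" where
  "normal_subset G A \<longleftrightarrow> A \<subseteq> carrier G \<and>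
     {inv\<^bsub>G\<^esub> g \<otimes>\<^bsub>G\<^esub> a \<otimes>\<^bsub>G\<^esub> g | a g. a \<in> A \<and> g \<in> carrier G} = A"

end

theory Submission
  imports Defs
begin

text \<open>Since X is normal, [x,g] = x^-1 x^g shows [X,G] \<subseteq> \<langle>X\<rangle>, and the identity
  [ab,y] = [a,y]^b [b,y], together with normality of [X,Y], shows that [a,y] \<in> [X,Y] for
  every a \<in> \<langle>X\<rangle> and y \<in> Y. Hence [[X,G],Y] \<subseteq> [X,Y] \<subseteq> [X,G], and applying the monotone
  operator C \<mapsto> [C, _k Y] gives
  [X, _(M+1) Y] \<subseteq> [[X,G], _M Y] = [[[X,G],Y], _(M-1) Y] \<subseteq> [X, _M Y].
  The left end equals the right end by the choice of M, which closes the chain.\<close>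

context group
begin

lemma normal_subset_subset: "normal_subset G A \<Longrightarrow> A \<subseteq> carrier G"
  unfolding normal_subset_def by blast

lemma normal_subset_conj_closed:
  "normal_subset G A \<Longrightarrow> a \<in> A \<Longrightarrow> g \<in> carrier G \<Longrightarrow> inv g \<otimes> a \<otimes> g \<in> A"
  unfolding normal_subset_def by blast

lemma mult_inv_cancel_left [simp]:
  "x \<in> carrier G \<Longrightarrow> z \<in> carrier G \<Longrightarrow> x \<otimes> (inv x \<otimes> z) = z"
  by (simp add: m_assoc[symmetric])

lemma inv_mult_cancel_left [simp]:
  "x \<in> carrier G \<Longrightarrow> z \<in> carrier G \<Longrightarrow> inv x \<otimes> (x \<otimes> z) = z"
  by (simp add: m_assoc[symmetric])

lemma gcomm_closed [simp]:
  "x \<in> carrier G \<Longrightarrow> y \<in> carrier G \<Longrightarrow> gcomm G x y \<in> carrier G"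
  by (simp add: gcomm_def)

lemma gcomm_conj:
  "x \<in> carrier G \<Longrightarrow> y \<in> carrier G \<Longrightarrow> g \<in> carrier G \<Longrightarrow>
   inv g \<otimes> gcomm G x y \<otimes> g = gcomm G (inv g \<otimes> x \<otimes> g) (inv g \<otimes> y \<otimes> g)"
  by (simp add: gcomm_def inv_mult_group m_assoc)

lemma gcomm_inv_left:
  "x \<in> carrier G \<Longrightarrow> y \<in> carrier G \<Longrightarrow> gcomm G (inv x) y = x \<otimes> inv (gcomm G x y) \<otimes> inv x"
  by (simp add: gcomm_def inv_mult_group m_assoc)

lemma gcomm_mult_left:
  "a \<in> carrier G \<Longrightarrow> b \<in> carrier G \<Longrightarrow> y \<in> carrier G \<Longrightarrow>
   gcomm G (a \<otimes> b) y = (inv b \<otimes> gcomm G a y \<otimes> b) \<otimes> gcomm G b y"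
  by (simp add: gcomm_def inv_mult_group m_assoc)

lemma gcomm_generators_subset:
  "A \<subseteq> carrier G \<Longrightarrow> B \<subseteq> carrier G \<Longrightarrow> {gcomm G a b | a b. a \<in> A \<and> b \<in> B} \<subseteq> carrier G"
  by (auto intro!: gcomm_closed)

lemma gcomm_mem_comm_set: "a \<in> A \<Longrightarrow> b \<in> B \<Longrightarrow> gcomm G a b \<in> comm_set G A B"
  unfolding comm_set_def by (blast intro: generate.incl)

lemma comm_set_normal:
  assumes A: "normal_subset G A" and B: "normal_subset G B"
  shows "comm_set G A B \<lhd> G"
  unfolding comm_set_def
proof (rule normal_generateI)
  have "A \<subseteq> carrier G" "B \<subseteq> carrier G"
    using A B by (simp_all add: normal_subset_subset)
  then show "{gcomm G a b | a b. a \<in> A \<and> b \<in> B} \<subseteq> carrier G"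
    by (rule gcomm_generators_subset)
  fix h g
  assume "h \<in> {gcomm G a b | a b. a \<in> A \<and> b \<in> B}" and g: "g \<in> carrier G"
  then obtain a b where h: "h = gcomm G a b" and a: "a \<in> A" and b: "b \<in> B"
    by blast
  have "g \<otimes> h \<otimes> inv g = gcomm G (g \<otimes> a \<otimes> inv g) (g \<otimes> b \<otimes> inv g)"
    using gcomm_conj[of a b "inv g"] a b g \<open>A \<subseteq> carrier G\<close> \<open>B \<subseteq> carrier G\<close> h by auto
  moreover have "g \<otimes> a \<otimes> inv g \<in> A" "g \<otimes> b \<otimes> inv g \<in> B"
    using normal_subset_conj_closed[OF A a, of "inv g"] normal_subset_conj_closed[OF B b, of "inv g"] g
    by simp_all
  ultimately show "g \<otimes> h \<otimes> inv g \<in> {gcomm G a b | a b. a \<in> A \<and> b \<in> B}"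
    by blast
qed

lemma comm_set_mono: "A \<subseteq> A' \<Longrightarrow> B \<subseteq> B' \<Longrightarrow> comm_set G A B \<subseteq> comm_set G A' B'"
  unfolding comm_set_def by (rule mono_generate) blast

lemma iter_comm_mono: "A \<subseteq> A' \<Longrightarrow> iter_comm G A B k \<subseteq> iter_comm G A' B k"
  by (induction k) (simp_all add: iter_comm_def comm_set_mono)

lemma iter_comm_Suc: "iter_comm G A B (Suc k) = iter_comm G (comm_set G A B) B k"
  unfolding iter_comm_def by (simp only: funpow_Suc_right o_def)

lemma gcomm_generate_mem_comm_set:
  assumes X: "normal_subset G X" and Y: "normal_subset G Y"
    and a: "a \<in> generate G X" and y: "y \<in> Y"
  shows "gcomm G a y \<in> comm_set G X Y"
proof -
  have yc: "y \<in> carrier G"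
    using Y y normal_subset_subset by blast
  interpret N: normal "comm_set G X Y" G
    by (rule comm_set_normal[OF X Y])
  from a show ?thesis
  proof (induction rule: generate.induct)
    case one
    show ?case using yc N.one_closed by (simp add: gcomm_def)
  next
    case (incl x)
    then show ?case using y by (rule gcomm_mem_comm_set)
  next
    case (inv x)
    have xc: "x \<in> carrier G"
      using X inv normal_subset_subset by blast
    have "inv (gcomm G x y) \<in> comm_set G X Y"
      using gcomm_mem_comm_set[OF inv y] by (rule N.m_inv_closed)
    then show ?case
      using N.inv_op_closed2[OF xc] gcomm_inv_left[OF xc yc] by simp
  next
    case (eng a b)
    have ac: "a \<in> carrier G" and bc: "b \<in> carrier G"
      using eng.hyps generate_in_carrier[OF normal_subset_subset[OF X]] by auto
    have "inv b \<otimes> gcomm G a y \<otimes> b \<in> comm_set G X Y"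
      using bc eng.IH(1) by (rule N.inv_op_closed1)
    then show ?case
      unfolding gcomm_mult_left[OF ac bc yc] using eng.IH(2) by (rule N.m_closed)
  qed
qed

lemma comm_set_carrier_subset_generate:
  assumes X: "normal_subset G X"
  shows "comm_set G X (carrier G) \<subseteq> generate G X"
  unfolding comm_set_def
proof (rule generate_subgroup_incl[OF _ generate_is_subgroup[OF normal_subset_subset[OF X]]], safe)
  fix x g
  assume x: "x \<in> X" and g: "g \<in> carrier G"
  have "x \<in> carrier G"
    using X x normal_subset_subset by blast
  then have "gcomm G x g = inv x \<otimes> (inv g \<otimes> x \<otimes> g)"
    using g by (simp add: gcomm_def m_assoc)
  moreover have "inv g \<otimes> x \<otimes> g \<in> X"
    using X x g by (rule normal_subset_conj_closed)
  ultimately show "gcomm G x g \<in> generate G X"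
    using x by (metis generate.eng generate.inv generate.incl)
qed

lemma comm_set_comm_set_carrier_subset:
  assumes X: "normal_subset G X" and Y: "normal_subset G Y"
  shows "comm_set G (comm_set G X (carrier G)) Y \<subseteq> comm_set G X Y"
  unfolding comm_set_def[of G "comm_set G X (carrier G)"]
proof (rule generate_subgroup_incl[OF _ normal_imp_subgroup[OF comm_set_normal[OF X Y]]], safe)
  fix a y
  assume "a \<in> comm_set G X (carrier G)" and y: "y \<in> Y"
  then have "a \<in> generate G X"
    using comm_set_carrier_subset_generate[OF X] by blast
  then show "gcomm G a y \<in> comm_set G X Y"
    using X Y y by (intro gcomm_generate_mem_comm_set)
qed

end

theorem lemma2p2:
  fixes G :: "('a, 'b) monoid_scheme" (structure) and M :: nat and X Y :: "'a set"
  assumes "group G" and "finite (carrier G)"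
    and M_stab: "\<And>A B i. normal_subset G A \<Longrightarrow> normal_subset G B \<Longrightarrow> M \<le> i \<Longrightarrow>
                   iter_comm G A B M = iter_comm G A B i"
    and "normal_subset G X" and "normal_subset G Y"
  shows "iter_comm G X Y M = iter_comm G (comm_set G X (carrier G)) Y M"
proof -
  interpret group G by fact
  note X = \<open>normal_subset G X\<close> and Y = \<open>normal_subset G Y\<close>
  \<comment> \<open>[\<emptyset>,\<emptyset>] = \<langle>\<emptyset>\<rangle> = {1} differs from [\<emptyset>, _0 \<emptyset>] = \<emptyset>, so the hypothesis on M forces M > 0.\<close>
  have empty: "normal_subset G {}"
    unfolding normal_subset_def by auto
  have "iter_comm G {} {} M = iter_comm G {} {} (Suc M)"
    using empty empty by (rule M_stab) simp
  then have "M \<noteq> 0"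
    by (cases M) (simp_all add: iter_comm_def comm_set_def generate_empty)
  then obtain m where m: "M = Suc m"
    using not0_implies_Suc by blast
  have "iter_comm G X Y M = iter_comm G X Y (Suc M)"
    using X Y by (rule M_stab) simp
  also have "\<dots> = iter_comm G (comm_set G X Y) Y M"
    by (rule iter_comm_Suc)
  also have "\<dots> \<subseteq> iter_comm G (comm_set G X (carrier G)) Y M"
    using Y by (intro iter_comm_mono comm_set_mono normal_subset_subset order_refl)
  finally have lower: "iter_comm G X Y M \<subseteq> iter_comm G (comm_set G X (carrier G)) Y M" .
  have "iter_comm G (comm_set G X (carrier G)) Y M
      = iter_comm G (comm_set G (comm_set G X (carrier G)) Y) Y m"
    unfolding m by (rule iter_comm_Suc)
  also have "\<dots> \<subseteq> iter_comm G (comm_set G X Y) Y m"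
    using X Y by (intro iter_comm_mono comm_set_comm_set_carrier_subset)
  also have "\<dots> = iter_comm G X Y M"
    unfolding m by (rule iter_comm_Suc[symmetric])
  finally show ?thesis
    using lower by (rule equalityI[rotated])
qed

end
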